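(* Fix a tomographically complete measurement $\mu^\diamond$ on $\mathcal X=\mathbb C^n$ with finite outcome set $\mathcal Y$. Let $\Gamma:\mathrm{Dens}(\mathcal X)\to\mathcal R$ be a quantum property and $\Gamma^\diamond:\mathcal P^\diamond\to\mathcal R$ be $\Gamma^\diamond(p)=\Gamma(\phi^+p)$. Then $\Gamma$ is elicitable (by a quantum score) if and only if $\Gamma^\diamond$ is elicitable (by a classical scoring rule on $\mathcal P^\diamond$), and for $\mathcal R\subseteq\mathbb R^k$, $\Gamma$ is identifiable if and only if $\Gamma^\diamond$ is identifiable.
   Context: $\mathrm{Herm}(\mathcal X)$ the Hermitian matrices with $\langle X,Y\rangle=\mathrm{Tr}(X^*Y)$, $\mathrm{Dens}(\mathcal X)$ the density matrices. A measurement $\mu=\{\mu_y\}_{y\in\mathcal Y}$ is a family of positive semidefinite operators with $\sum_y\mu_y=I$; tomographically complete if its real span is $\mathrm{Herm}(\mathcal X)$. Let $\phi:\mathrm{Herm}(\mathcal X)\to\mathbb R^{\mathcal Y}$, $(\phi X)_y=\langle\mu^\diamond_y,X\rangle$ (injective), $\phi^+$ its Moore–Penrose pseudoinverse (a linear left inverse), and $\mathcal P^\diamond=\phi(\mathrm{Dens}(\mathcal X))\subseteq\Delta_{\mathcal Y}$. A quantum property is any map $\Gamma:\mathrm{Dens}(\mathcal X)\to\mathcal R$. A quantum score for reports in $\mathcal R$ is $S=(s,\mu)$ with $s:\mathcal R\times\mathbb N\to\mathbb R$, $\mu:\mathcal R\to$ measurements, expected score $S(r;\rho)=\sum_y\langle\mu(r)_y,\rho\rangle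 s(r,y)$; $S$ elicits $\Gamma$ if $\{\Gamma(\rho)\}=\arg\max_{r}S(r;\rho)$ for all $\rho$. A classical scoring rule $\hat s:\mathcal R\times\mathcal Y\to\mathbb R$ elicits $\Gamma^\diamond$ on $\mathcal P^\diamond$ if $\{\Gamma^\diamond(p)\}=\arg\max_r\sum_yp_y\hat s(r,y)$ for all $p\in\mathcal P^\diamond$. $\Gamma:\mathrm{Dens}(\mathcal X)\to\mathbb R^k$ is identifiable if for each $r$ in its range there is $V(r)\in\mathrm{Herm}(\mathcal X)^k$ with $\Gamma(\rho)=r\iff(\langle V(r)_i,\rho\rangle)_{i=1}^k=0$ for all $\rho$; a classical $\Gamma^\diamond:\mathcal P^\diamond\to\mathbb R^k$ is identifiable if for each $r$ in its range there is $v(r)\in\mathbb R^{k\times\mathcal Y}$ with $\Gamma^\diamond(p)=r\iff v(r)p=0$ for all $p\in\mathcal P^\diamond$. *)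

theory Defs
  imports "HOL-Analysis.Analysis"
begin

text \<open>Operators on X = C^n are modelled as complex n x n matrices indexed by a
finite type 'n (so n = CARD('n) is arbitrary but fixed).\<close>

type_synonym 'n cmat = "complex^'n^'n"

definition cadj :: "'n::finite cmat \<Rightarrow> 'n cmat" where
  "cadj A = (\<chi> i j. cnj (A $ j $ i))"

definition hermitian :: "'n::finite cmat \<Rightarrow> bool" where
  "hermitian A \<longleftrightarrow> cadj A = A"

definition Herm :: "'n::finite cmat set" where
  "Herm = {A. hermitian A}"

definition psd :: "'n::finite cmat \<Rightarrow> bool" where
  "psd A \<longleftrightarrow> hermitian A \<and>
     (\<forall>v::complex^'n. 0 \<le> Re (\<Sum>i\<in>UNIV. cnj (v $ i) * (A *v v) $ i))"

definition Dens :: "'n::finite cmat set" where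
  "Dens = {A. psd A \<and> trace A = 1}"

text \<open>Hilbert-Schmidt inner product <X,Y> = Tr(X^* Y); it is real for Hermitian X, Y.\<close>
definition hs_inner :: "'n::finite cmat \<Rightarrow> 'n cmat \<Rightarrow> real" where
  "hs_inner X Y = Re (trace (cadj X ** Y))"

definition measurement :: "('y::finite \<Rightarrow> 'n::finite cmat) \<Rightarrow> bool" where
  "measurement \<mu> \<longleftrightarrow> (\<forall>y. psd (\<mu> y)) \<and> (\<Sum>y\<in>UNIV. \<mu> y) = mat 1"

definition tomo_complete :: "('y::finite \<Rightarrow> 'n::finite cmat) \<Rightarrow> bool" where
  "tomo_complete \<mu> \<longleftrightarrow> measurement \<mu> \<and> span (range \<mu>) = Herm"

definition phi :: "('y::finite \<Rightarrow> 'n::finite cmat) \<Rightarrow> 'n cmat \<Rightarrow> ('y \<Rightarrow> real)" where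
  "phi \<mu> X = (\<lambda>y. hs_inner (\<mu> y) X)"

text \<open>Moore-Penrose pseudoinverse of phi : Herm(X) \<rightarrow> R^Y (standard inner product on R^Y,
Hilbert-Schmidt inner product on Herm(X)): phi^+ p is the least-squares solution of
minimal norm.\<close>
definition lsq_solutions :: "('y::finite \<Rightarrow> 'n::finite cmat) \<Rightarrow> ('y \<Rightarrow> real) \<Rightarrow> 'n cmat set" where
  "lsq_solutions \<mu> p = {X \<in> Herm. \<forall>Z\<in>Herm.
      (\<Sum>y\<in>UNIV. (phi \<mu> X y - p y)^2) \<le> (\<Sum>y\<in>UNIV. (phi \<mu> Z y - p y)^2)}"

definition phi_pinv :: "('y::finite \<Rightarrow> 'n::finite cmat) \<Rightarrow> ('y \<Rightarrow> real) \<Rightarrow> 'n cmat" where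
  "phi_pinv \<mu> p = (THE X. X \<in> lsq_solutions \<mu> p \<and>
      (\<forall>Z\<in>lsq_solutions \<mu> p. hs_inner X X \<le> hs_inner Z Z))"

definition Pdiam :: "('y::finite \<Rightarrow> 'n::finite cmat) \<Rightarrow> ('y \<Rightarrow> real) set" where
  "Pdiam \<mu> = phi \<mu> ` Dens"

text \<open>Measurements used by quantum scores: outcomes in nat, finitely many nonzero effects.\<close>
definition nat_measurement :: "(nat \<Rightarrow> 'n::finite cmat) \<Rightarrow> bool" where
  "nat_measurement M \<longleftrightarrow> finite {y. M y \<noteq> 0} \<and> (\<forall>y. psd (M y)) \<and>
     (\<Sum>y\<in>{y. M y \<noteq> 0}. M y) = mat 1"

definition qscore_expected ::
  "('r \<Rightarrow> nat \<Rightarrow> real) \<Rightarrow> ('r \<Rightarrow> nat \<Rightarrow> 'n::finite cmat) \<Rightarrow> 'r \<Rightarrow> 'n cmat \<Rightarrow> real" where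
  "qscore_expected s M r \<rho> = (\<Sum>y\<in>{y. M r y \<noteq> 0}. hs_inner (M r y) \<rho> * s r y)"

definition q_elicits ::
  "'r set \<Rightarrow> ('r \<Rightarrow> nat \<Rightarrow> real) \<Rightarrow> ('r \<Rightarrow> nat \<Rightarrow> 'n::finite cmat) \<Rightarrow> ('n cmat \<Rightarrow> 'r) \<Rightarrow> bool" where
  "q_elicits R s M \<Gamma> \<longleftrightarrow> (\<forall>r\<in>R. nat_measurement (M r)) \<and>
     (\<forall>\<rho>\<in>Dens. {\<Gamma> \<rho>} = {r\<in>R. \<forall>r'\<in>R. qscore_expected s M r' \<rho> \<le> qscore_expected s M r \<rho>})"

definition q_elicitable :: "'r set \<Rightarrow> ('n::finite cmat \<Rightarrow> 'r) \<Rightarrow> bool" where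
  "q_elicitable R \<Gamma> \<longleftrightarrow> (\<exists>s M. q_elicits R s M \<Gamma>)"

definition c_elicits ::
  "'r set \<Rightarrow> ('y::finite \<Rightarrow> real) set \<Rightarrow> ('r \<Rightarrow> 'y \<Rightarrow> real) \<Rightarrow> (('y \<Rightarrow> real) \<Rightarrow> 'r) \<Rightarrow> bool" where
  "c_elicits R P s G \<longleftrightarrow> (\<forall>p\<in>P. {G p} =
     {r\<in>R. \<forall>r'\<in>R. (\<Sum>y\<in>UNIV. p y * s r' y) \<le> (\<Sum>y\<in>UNIV. p y * s r y)})"

definition c_elicitable :: "'r set \<Rightarrow> ('y::finite \<Rightarrow> real) set \<Rightarrow> (('y \<Rightarrow> real) \<Rightarrow> 'r) \<Rightarrow> bool" where
  "c_elicitable R P G \<longleftrightarrow> (\<exists>s. c_elicits R P s G)"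

text \<open>Identifiability; R^k is modelled as 'k \<Rightarrow> real for a finite index type 'k.\<close>
definition q_identifiable :: "('n::finite cmat \<Rightarrow> ('k::finite \<Rightarrow> real)) \<Rightarrow> bool" where
  "q_identifiable \<Gamma> \<longleftrightarrow> (\<forall>r\<in>\<Gamma> ` Dens. \<exists>V::'k \<Rightarrow> 'n cmat. (\<forall>i. V i \<in> Herm) \<and>
     (\<forall>\<rho>\<in>Dens. \<Gamma> \<rho> = r \<longleftrightarrow> (\<forall>i. hs_inner (V i) \<rho> = 0)))"

definition c_identifiable :: "('y::finite \<Rightarrow> real) set \<Rightarrow> (('y \<Rightarrow> real) \<Rightarrow> ('k::finite \<Rightarrow> real)) \<Rightarrow> bool" where
  "c_identifiable P G \<longleftrightarrow> (\<forall>r\<in>G ` P. \<exists>v::'k \<Rightarrow> 'y \<Rightarrow> real.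
     \<forall>p\<in>P. G p = r \<longleftrightarrow> (\<forall>i. (\<Sum>y\<in>UNIV. v i y * p y) = 0))"

end

theory Submission
  imports Defs
begin

text \<open>Tomographic completeness makes \<open>\<phi>\<close> injective on Hermitian matrices, so \<open>\<phi>\<^sup>+ (\<phi> \<rho>) = \<rho>\<close>
and \<open>\<Gamma>\<^sup>\<diamond> \<circ> \<phi> = \<Gamma>\<close> on density matrices. Moreover the Hermitian matrices are exactly the real
combinations \<open>\<Sum>\<^sub>y c\<^sub>y \<mu>\<^sub>y\<close>, whose Hilbert-Schmidt pairing with \<open>\<rho>\<close> is \<open>\<Sum>\<^sub>y c\<^sub>y (\<phi> \<rho>)\<^sub>y\<close>. Hence the
linear functionals of \<open>\<rho>\<close> given by Hermitian matrices (identification functions, expected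
quantum scores) are exactly the linear functionals of \<open>p = \<phi> \<rho>\<close>; conversely a classical
scoring rule becomes a quantum score by always measuring \<open>\<mu>\<close>.\<close>

lemma hs_inner_eq_sum: "hs_inner X Y = (\<Sum>i\<in>UNIV. \<Sum>k\<in>UNIV. Re (cnj (X$k$i) * Y$k$i))"
  unfolding hs_inner_def trace_def cadj_def matrix_matrix_mult_def by (simp add: Re_sum)

lemma hs_inner_add_left: "hs_inner (A + B) X = hs_inner A X + hs_inner B X"
  by (simp add: hs_inner_eq_sum sum.distrib ring_distribs)

lemma hs_inner_scaleR_left: "hs_inner (c *\<^sub>R A) X = c * hs_inner A X"
  by (simp add: hs_inner_eq_sum sum_distrib_left algebra_simps)

lemma hs_inner_zero_left: "hs_inner 0 X = 0"
  by (simp add: hs_inner_eq_sum)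

lemma hs_inner_sum_left: "hs_inner (\<Sum>y\<in>S. f y) X = (\<Sum>y\<in>S. hs_inner (f y) X)"
  by (induct S rule: infinite_finite_induct) (simp_all add: hs_inner_add_left hs_inner_zero_left)

lemma hs_inner_diff_right: "hs_inner A (X - Y) = hs_inner A X - hs_inner A Y"
  by (simp add: hs_inner_eq_sum sum_subtractf ring_distribs)

lemma hs_inner_self_eq_0: "hs_inner X X = 0 \<longleftrightarrow> X = 0"
proof
  have norm_sq: "\<And>z::complex. Re (cnj z * z) = (cmod z)\<^sup>2"
    by (simp add: cmod_power2 flip: power2_eq_square)
  assume "hs_inner X X = 0"
  then have "(\<Sum>i\<in>UNIV. \<Sum>k\<in>UNIV. (cmod (X$k$i))\<^sup>2) = 0"
    by (simp only: hs_inner_eq_sum norm_sq)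
  then have "\<forall>i k. cmod (X$k$i) = 0"
    by (simp add: sum_nonneg_eq_0_iff sum_nonneg)
  then show "X = 0" by (simp add: vec_eq_iff)
qed (simp add: hs_inner_zero_left)

lemma psd_zero: "psd 0"
  unfolding psd_def hermitian_def cadj_def by (simp add: vec_eq_iff)

lemma psd_imp_Herm: "psd A \<Longrightarrow> A \<in> Herm"
  by (simp add: psd_def Herm_def)

lemma Dens_subset_Herm: "Dens \<subseteq> Herm"
  by (auto simp: Dens_def psd_imp_Herm)

lemma hs_inner_combination:
  "hs_inner (\<Sum>y\<in>UNIV. c y *\<^sub>R \<mu> y) \<rho> = (\<Sum>y\<in>UNIV. c y * phi \<mu> \<rho> y)"
  by (simp add: hs_inner_sum_left hs_inner_scaleR_left phi_def)

lemma span_range_eq_combinations: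
  fixes \<mu> :: "'y::finite \<Rightarrow> 'a::real_vector"
  shows "span (range \<mu>) = range (\<lambda>c. \<Sum>y\<in>UNIV. c y *\<^sub>R \<mu> y)"
proof
  let ?T = "range (\<lambda>c. \<Sum>y\<in>UNIV. c y *\<^sub>R \<mu> y)"
  have "subspace ?T"
    unfolding subspace_def
  proof (intro conjI ballI allI)
    show "0 \<in> ?T" by (rule range_eqI[of _ _ "\<lambda>_. 0"]) simp
  next
    fix x z assume "x \<in> ?T" "z \<in> ?T"
    then obtain a b where "x = (\<Sum>y\<in>UNIV. a y *\<^sub>R \<mu> y)" "z = (\<Sum>y\<in>UNIV. b y *\<^sub>R \<mu> y)" by auto
    then show "x + z \<in> ?T"
      by (intro range_eqI[of _ _ "\<lambda>y. a y + b y"]) (simp add: sum.distrib scaleR_add_left)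
  next
    fix t x assume "x \<in> ?T"
    then obtain a where "x = (\<Sum>y\<in>UNIV. a y *\<^sub>R \<mu> y)" by auto
    then show "t *\<^sub>R x \<in> ?T"
      by (intro range_eqI[of _ _ "\<lambda>y. t * a y"]) (simp add: scaleR_sum_right)
  qed
  moreover have "\<mu> z \<in> ?T" for z
    by (rule range_eqI[of _ _ "\<lambda>y. if y = z then 1 else 0"])
       (simp add: if_distrib[of "\<lambda>c. c *\<^sub>R _"] cong: if_cong)
  ultimately show "span (range \<mu>) \<subseteq> ?T"
    by (intro span_minimal) auto
  show "?T \<subseteq> span (range \<mu>)"
    by (clarsimp; intro span_sum span_scale span_base; simp)
qed

text \<open>The quantum score measures a \<open>nat\<close>-indexed copy of \<open>\<mu>\<close> along an injection
\<open>'y \<rightarrow> nat\<close>, with zero effects at the other indices.\<close>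
lemma measurement_score_as_qscore:
  fixes \<mu> :: "'y::finite \<Rightarrow> 'n::finite cmat" and sc :: "'r \<Rightarrow> 'y \<Rightarrow> real"
  assumes "measurement \<mu>"
  shows "\<exists>s M. (\<forall>r. nat_measurement (M r)) \<and>
           (\<forall>r \<rho>. qscore_expected s M r \<rho> = (\<Sum>y\<in>UNIV. phi \<mu> \<rho> y * sc r y))"
proof -
  obtain f :: "'y \<Rightarrow> nat" where "inj f"
    using ex_bij_betw_finite_nat[of "UNIV::'y set"] by (auto simp: bij_betw_def)
  define M :: "'r \<Rightarrow> nat \<Rightarrow> 'n cmat" where "M r n = (if n \<in> range f then \<mu> (inv f n) else 0)" for r n
  define s :: "'r \<Rightarrow> nat \<Rightarrow> real" where "s r n = sc r (inv f n)" for r n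
  have supp: "{n. M r n \<noteq> 0} \<subseteq> range f" for r by (auto simp: M_def)
  have M_f: "M r (f y) = \<mu> y" for r y using \<open>inj f\<close> by (simp add: M_def)
  have sum_supp: "(\<Sum>n\<in>{n. M r n \<noteq> 0}. g n) = (\<Sum>y\<in>UNIV. g (f y))"
    if "\<And>n. M r n = 0 \<Longrightarrow> g n = 0" for r and g :: "nat \<Rightarrow> 'b::comm_monoid_add"
  proof -
    have "(\<Sum>n\<in>{n. M r n \<noteq> 0}. g n) = (\<Sum>n\<in>range f. g n)"
      using that by (intro sum.mono_neutral_left[OF _ supp]) auto
    also have "\<dots> = (\<Sum>y\<in>UNIV. g (f y))" by (simp add: sum.reindex[OF \<open>inj f\<close>])
    finally show ?thesis .
  qed
  show ?thesis
  proof (intro exI conjI allI)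
    fix r
    show "nat_measurement (M r)"
      using assms finite_subset[OF supp] sum_supp[of r "M r"]
      by (auto simp: nat_measurement_def measurement_def M_def M_f psd_zero inv_f_f[OF \<open>inj f\<close>])
  next
    fix r \<rho>
    show "qscore_expected s M r \<rho> = (\<Sum>y\<in>UNIV. phi \<mu> \<rho> y * sc r y)"
      unfolding qscore_expected_def
      by (subst sum_supp) (auto simp: hs_inner_zero_left M_f s_def phi_def \<open>inj f\<close>)
  qed
qed

context
  fixes \<mu> :: "'y::finite \<Rightarrow> 'n::finite cmat"
  assumes tomo: "tomo_complete \<mu>"
begin

lemma Herm_eq_combinations: "Herm = range (\<lambda>c. \<Sum>y\<in>UNIV. c y *\<^sub>R \<mu> y)"
  using tomo by (simp add: tomo_complete_def flip: span_range_eq_combinations)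

lemma Herm_imp_combination:
  assumes "X \<in> Herm" obtains c where "X = (\<Sum>y\<in>UNIV. c y *\<^sub>R \<mu> y)"
  using assms by (auto simp: Herm_eq_combinations)

lemma inj_on_phi_Herm: "inj_on (phi \<mu>) Herm"
proof (rule inj_onI)
  fix X Y assume "X \<in> Herm" "Y \<in> Herm" and eq: "phi \<mu> X = phi \<mu> Y"
  then have "X - Y \<in> Herm"
    using tomo unfolding tomo_complete_def by (metis span_diff)
  then obtain c where c: "X - Y = (\<Sum>y\<in>UNIV. c y *\<^sub>R \<mu> y)" by (rule Herm_imp_combination)
  have "phi \<mu> (X - Y) = (\<lambda>_. 0)"
    using eq by (simp add: phi_def hs_inner_diff_right fun_eq_iff)
  then have "hs_inner (X - Y) (X - Y) = 0"
    by (subst (1) c) (simp add: hs_inner_combination)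
  then show "X = Y" by (simp add: hs_inner_self_eq_0)
qed

lemma phi_pinv_phi:
  assumes X: "X \<in> Herm" shows "phi_pinv \<mu> (phi \<mu> X) = X"
proof -
  have lsq: "lsq_solutions \<mu> (phi \<mu> X) = {X}"
  proof (intro equalityI subsetI)
    fix Z assume "Z \<in> lsq_solutions \<mu> (phi \<mu> X)"
    then have Z: "Z \<in> Herm" and "(\<Sum>y\<in>UNIV. (phi \<mu> Z y - phi \<mu> X y)\<^sup>2) \<le> 0"
      using X unfolding lsq_solutions_def by auto
    then have "(\<Sum>y\<in>UNIV. (phi \<mu> Z y - phi \<mu> X y)\<^sup>2) = 0"
      by (intro antisym sum_nonneg) auto
    then have "\<forall>y. (phi \<mu> Z y - phi \<mu> X y)\<^sup>2 = 0"
      by (simp add: sum_nonneg_eq_0_iff)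
    then have "phi \<mu> Z = phi \<mu> X" by (simp add: fun_eq_iff)
    with Z X show "Z \<in> {X}" using inj_on_phi_Herm by (auto dest: inj_onD)
  qed (use X in \<open>auto simp: lsq_solutions_def intro: sum_nonneg\<close>)
  show ?thesis
    unfolding phi_pinv_def lsq by (rule the_equality) auto
qed

lemma phi_pinv_phi_Dens: "\<rho> \<in> Dens \<Longrightarrow> phi_pinv \<mu> (phi \<mu> \<rho>) = \<rho>"
  using Dens_subset_Herm by (intro phi_pinv_phi) auto

lemma Herm_pairing_as_phi_functional:
  assumes "V \<in> Herm" shows "\<exists>c. \<forall>\<rho>. hs_inner V \<rho> = (\<Sum>y\<in>UNIV. c y * phi \<mu> \<rho> y)"
proof -
  from assms obtain c where V: "V = (\<Sum>y\<in>UNIV. c y *\<^sub>R \<mu> y)" by (rule Herm_imp_combination)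
  show ?thesis by (rule exI[of _ c]) (simp add: V hs_inner_combination)
qed

lemma phi_functional_as_Herm_pairing:
  "\<exists>V. V \<in> Herm \<and> (\<forall>\<rho>. (\<Sum>y\<in>UNIV. c y * phi \<mu> \<rho> y) = hs_inner V \<rho>)"
proof (intro exI conjI)
  show "(\<Sum>y\<in>UNIV. c y *\<^sub>R \<mu> y) \<in> Herm" unfolding Herm_eq_combinations by (rule rangeI)
qed (simp add: hs_inner_combination)

lemma qscore_expected_as_phi_functional:
  assumes "nat_measurement (M r)"
  shows "\<exists>c. \<forall>\<rho>. qscore_expected s M r \<rho> = (\<Sum>y\<in>UNIV. phi \<mu> \<rho> y * c y)"
proof -
  let ?X = "\<Sum>n\<in>{n. M r n \<noteq> 0}. s r n *\<^sub>R M r n"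
  have "?X \<in> Herm"
    using tomo assms
    by (auto simp: tomo_complete_def nat_measurement_def intro!: span_sum span_scale
             dest: psd_imp_Herm)
  then obtain c where X: "?X = (\<Sum>y\<in>UNIV. c y *\<^sub>R \<mu> y)" by (rule Herm_imp_combination)
  have "qscore_expected s M r \<rho> = (\<Sum>y\<in>UNIV. phi \<mu> \<rho> y * c y)" for \<rho>
  proof -
    have "qscore_expected s M r \<rho> = hs_inner ?X \<rho>"
      by (simp add: qscore_expected_def hs_inner_sum_left hs_inner_scaleR_left mult.commute)
    also have "\<dots> = (\<Sum>y\<in>UNIV. c y * phi \<mu> \<rho> y)"
      by (simp only: X hs_inner_combination)
    finally show ?thesis by (simp add: mult.commute)
  qed
  then show ?thesis by blast
qed

lemma c_elicits_Pdiam_iff: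
  "c_elicits R (Pdiam \<mu>) sc (\<lambda>p. \<Gamma> (phi_pinv \<mu> p)) \<longleftrightarrow>
     (\<forall>\<rho>\<in>Dens. {\<Gamma> \<rho>} = {r\<in>R. \<forall>r'\<in>R. (\<Sum>y\<in>UNIV. phi \<mu> \<rho> y * sc r' y)
                                       \<le> (\<Sum>y\<in>UNIV. phi \<mu> \<rho> y * sc r y)})"
  unfolding c_elicits_def Pdiam_def ball_simps(9)
  by (rule ball_cong[OF refl]) (simp only: phi_pinv_phi_Dens)

lemma c_identifiable_Pdiam_iff:
  fixes \<Gamma> :: "'n cmat \<Rightarrow> ('k::finite \<Rightarrow> real)"
  shows "c_identifiable (Pdiam \<mu>) (\<lambda>p. \<Gamma> (phi_pinv \<mu> p)) \<longleftrightarrow>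
     (\<forall>r\<in>\<Gamma> ` Dens. \<exists>v::'k \<Rightarrow> 'y \<Rightarrow> real.
        \<forall>\<rho>\<in>Dens. \<Gamma> \<rho> = r \<longleftrightarrow> (\<forall>i. (\<Sum>y\<in>UNIV. v i y * phi \<mu> \<rho> y) = 0))"
proof -
  have "(\<lambda>p. \<Gamma> (phi_pinv \<mu> p)) ` Pdiam \<mu> = \<Gamma> ` Dens"
    unfolding Pdiam_def image_image by (rule image_cong[OF refl]) (simp only: phi_pinv_phi_Dens)
  then show ?thesis
    unfolding c_identifiable_def Pdiam_def ball_simps(9)
    by (intro ball_cong[OF refl] ex_cong1) (simp only: phi_pinv_phi_Dens)
qed

lemma q_elicitable_iff_c_elicitable:
  "q_elicitable R \<Gamma> \<longleftrightarrow> c_elicitable R (Pdiam \<mu>) (\<lambda>p. \<Gamma> (phi_pinv \<mu> p))"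
proof
  assume "q_elicitable R \<Gamma>"
  then obtain s M where q: "q_elicits R s M \<Gamma>" unfolding q_elicitable_def by blast
  have "\<forall>r\<in>R. \<exists>c. \<forall>\<rho>. qscore_expected s M r \<rho> = (\<Sum>y\<in>UNIV. phi \<mu> \<rho> y * c y)"
    using q by (simp add: q_elicits_def qscore_expected_as_phi_functional)
  then obtain sc where sc: "\<forall>r\<in>R. \<forall>\<rho>. qscore_expected s M r \<rho> = (\<Sum>y\<in>UNIV. phi \<mu> \<rho> y * sc r y)"
    by (rule bchoice[THEN exE])
  have same: "{r\<in>R. \<forall>r'\<in>R. qscore_expected s M r' \<rho> \<le> qscore_expected s M r \<rho>}
      = {r\<in>R. \<forall>r'\<in>R. (\<Sum>y\<in>UNIV. phi \<mu> \<rho> y * sc r' y) \<le> (\<Sum>y\<in>UNIV. phi \<mu> \<rho> y * sc r y)}" for \<rho>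
    using sc by auto
  have "\<forall>\<rho>\<in>Dens. {\<Gamma> \<rho>} = {r\<in>R. \<forall>r'\<in>R. qscore_expected s M r' \<rho> \<le> qscore_expected s M r \<rho>}"
    using q unfolding q_elicits_def by (rule conjunct2)
  then have "c_elicits R (Pdiam \<mu>) sc (\<lambda>p. \<Gamma> (phi_pinv \<mu> p))"
    unfolding c_elicits_Pdiam_iff same .
  then show "c_elicitable R (Pdiam \<mu>) (\<lambda>p. \<Gamma> (phi_pinv \<mu> p))"
    unfolding c_elicitable_def by blast
next
  assume "c_elicitable R (Pdiam \<mu>) (\<lambda>p. \<Gamma> (phi_pinv \<mu> p))"
  then obtain sc where c: "c_elicits R (Pdiam \<mu>) sc (\<lambda>p. \<Gamma> (phi_pinv \<mu> p))"
    unfolding c_elicitable_def by blast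
  have "measurement \<mu>" using tomo by (simp add: tomo_complete_def)
  then obtain s M where "\<forall>r. nat_measurement (M r)"
    and qs: "\<And>r \<rho>. qscore_expected s M r \<rho> = (\<Sum>y\<in>UNIV. phi \<mu> \<rho> y * sc r y)"
    using measurement_score_as_qscore[of \<mu> sc] by blast
  with c have "q_elicits R s M \<Gamma>"
    unfolding c_elicits_Pdiam_iff q_elicits_def qs by blast
  then show "q_elicitable R \<Gamma>" unfolding q_elicitable_def by blast
qed

lemma q_identifiable_iff_c_identifiable:
  fixes \<Gamma> :: "'n cmat \<Rightarrow> ('k::finite \<Rightarrow> real)"
  shows "q_identifiable \<Gamma> \<longleftrightarrow> c_identifiable (Pdiam \<mu>) (\<lambda>p. \<Gamma> (phi_pinv \<mu> p))"
  unfolding q_identifiable_def c_identifiable_Pdiam_iff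
proof (intro ball_cong[OF refl] iffI)
  fix r
  assume "\<exists>V::'k \<Rightarrow> 'n cmat. (\<forall>i. V i \<in> Herm) \<and> (\<forall>\<rho>\<in>Dens. \<Gamma> \<rho> = r \<longleftrightarrow> (\<forall>i. hs_inner (V i) \<rho> = 0))"
  then obtain V :: "'k \<Rightarrow> 'n cmat" where VH: "\<forall>i. V i \<in> Herm"
    and V: "\<forall>\<rho>\<in>Dens. \<Gamma> \<rho> = r \<longleftrightarrow> (\<forall>i. hs_inner (V i) \<rho> = 0)"
    by blast
  have "\<forall>i. \<exists>c. \<forall>\<rho>. hs_inner (V i) \<rho> = (\<Sum>y\<in>UNIV. c y * phi \<mu> \<rho> y)"
    using VH by (intro allI Herm_pairing_as_phi_functional) blast
  then obtain v :: "'k \<Rightarrow> 'y \<Rightarrow> real" where "\<forall>i \<rho>. hs_inner (V i) \<rho> = (\<Sum>y\<in>UNIV. v i y * phi \<mu> \<rho> y)"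
    by (rule choice[THEN exE])
  with V show "\<exists>v::'k \<Rightarrow> 'y \<Rightarrow> real. \<forall>\<rho>\<in>Dens. \<Gamma> \<rho> = r \<longleftrightarrow> (\<forall>i. (\<Sum>y\<in>UNIV. v i y * phi \<mu> \<rho> y) = 0)"
    by (intro exI[of _ v]) simp
next
  fix r
  assume "\<exists>v::'k \<Rightarrow> 'y \<Rightarrow> real. \<forall>\<rho>\<in>Dens. \<Gamma> \<rho> = r \<longleftrightarrow> (\<forall>i. (\<Sum>y\<in>UNIV. v i y * phi \<mu> \<rho> y) = 0)"
  then obtain v :: "'k \<Rightarrow> 'y \<Rightarrow> real" where v: "\<forall>\<rho>\<in>Dens. \<Gamma> \<rho> = r \<longleftrightarrow> (\<forall>i. (\<Sum>y\<in>UNIV. v i y * phi \<mu> \<rho> y) = 0)"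
    by blast
  have "\<forall>i. \<exists>V. V \<in> Herm \<and> (\<forall>\<rho>. (\<Sum>y\<in>UNIV. v i y * phi \<mu> \<rho> y) = hs_inner V \<rho>)"
    by (intro allI phi_functional_as_Herm_pairing)
  then obtain V :: "'k \<Rightarrow> 'n cmat" where "\<forall>i. V i \<in> Herm \<and> (\<forall>\<rho>. (\<Sum>y\<in>UNIV. v i y * phi \<mu> \<rho> y) = hs_inner (V i) \<rho>)"
    by (rule choice[THEN exE])
  with v show "\<exists>V::'k \<Rightarrow> 'n cmat. (\<forall>i. V i \<in> Herm) \<and> (\<forall>\<rho>\<in>Dens. \<Gamma> \<rho> = r \<longleftrightarrow> (\<forall>i. hs_inner (V i) \<rho> = 0))"
    by (intro exI[of _ V]) simp
qed

end

theorem proposition6p2: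
  fixes \<mu> :: "'y::finite \<Rightarrow> 'n::finite cmat"
  assumes "tomo_complete \<mu>"
  shows "(\<forall>(R::'r set) (\<Gamma>::'n cmat \<Rightarrow> 'r). \<Gamma> ` Dens \<subseteq> R \<longrightarrow>
            (q_elicitable R \<Gamma> \<longleftrightarrow> c_elicitable R (Pdiam \<mu>) (\<lambda>p. \<Gamma> (phi_pinv \<mu> p))))
       \<and> (\<forall>\<Gamma>::'n cmat \<Rightarrow> ('k::finite \<Rightarrow> real).
            q_identifiable \<Gamma> \<longleftrightarrow> c_identifiable (Pdiam \<mu>) (\<lambda>p. \<Gamma> (phi_pinv \<mu> p)))"
  using q_elicitable_iff_c_elicitable[OF assms] q_identifiable_iff_c_identifiable[OF assms]
  by blast

end
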